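(* Let $R$ be a (not necessarily commutative) local ring with maximal ideal $\mathfrak{m}$, separated and complete for the $\mathfrak{m}$-adic topology, $\sigma:R\to R$ a ring automorphism with $\sigma(\mathfrak{m})=\mathfrak{m}$, and $\delta:R\to R$ a $\sigma$-derivation with $\delta(R)\subseteq\mathfrak{m}$ and $\delta(\mathfrak{m})\subseteq\mathfrak{m}^2$. Let $A=R[[X;\sigma,\delta]]$ and let $f\in A$ have finite reduced order $s=\mathrm{ord}^{red}(f)<\infty$. Then $A$ is the direct sum of left $R$-modules $$A=Af\oplus\bigoplus_{i=0}^{s-1}RX^i.$$
   Context: A $\sigma$-derivation is an additive map with $\delta(rs)=\delta(r)s+\sigma(r)\delta(s)$. $R[[X;\sigma,\delta]]$ is the skew power series ring whose elements are formal series $\sum_{n\ge0}r_nX^n$ ($r_n\in R$), with multiplication determined by $Xr=\sigma(r)X+\delta(r)$ (well defined by the hypotheses on $\sigma,\delta$ and completeness). For $f=\sum a_iX^i\in A$, $\mathrm{ord}^{red}(f)=\min\{i: a_i\in R^\times\}$. *)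

theory Defs
  imports Main
begin

definition two_sided_unit :: "'a::ring_1 \<Rightarrow> bool" where
  "two_sided_unit x \<longleftrightarrow> (\<exists>y. x * y = 1 \<and> y * x = 1)"

text \<open>The set of non-units; for a local ring this is the maximal ideal m.\<close>
definition maxideal :: "'a::ring_1 set" where
  "maxideal = {x. \<not> two_sided_unit x}"

definition local_ring :: "'a::ring_1 itself \<Rightarrow> bool" where
  "local_ring _ \<longleftrightarrow> (1::'a) \<noteq> 0 \<and>
     (\<forall>x\<in>(maxideal::'a set). \<forall>y\<in>maxideal. x + y \<in> maxideal) \<and>
     (\<forall>x\<in>(maxideal::'a set). \<forall>r. r * x \<in> maxideal \<and> x * r \<in> maxideal)"

inductive_set ideal_mult :: "'a::ring_1 set \<Rightarrow> 'a set \<Rightarrow> 'a set" for I J where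
  zero: "0 \<in> ideal_mult I J"
| prod: "x \<in> I \<Longrightarrow> y \<in> J \<Longrightarrow> x * y \<in> ideal_mult I J"
| add: "a \<in> ideal_mult I J \<Longrightarrow> b \<in> ideal_mult I J \<Longrightarrow> a + b \<in> ideal_mult I J"

primrec mpow :: "nat \<Rightarrow> 'a::ring_1 set" where
  "mpow 0 = UNIV"
| "mpow (Suc n) = ideal_mult maxideal (mpow n)"

definition madic_lim :: "(nat \<Rightarrow> 'a::ring_1) \<Rightarrow> 'a \<Rightarrow> bool" where
  "madic_lim s L \<longleftrightarrow> (\<forall>n. \<exists>N. \<forall>p\<ge>N. s p - L \<in> mpow n)"

definition madic_cauchy :: "(nat \<Rightarrow> 'a::ring_1) \<Rightarrow> bool" where
  "madic_cauchy s \<longleftrightarrow> (\<forall>n. \<exists>N. \<forall>p\<ge>N. \<forall>q\<ge>N. s p - s q \<in> mpow n)"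

definition madic_separated :: "'a::ring_1 itself \<Rightarrow> bool" where
  "madic_separated _ \<longleftrightarrow> (\<Inter>n. (mpow n :: 'a set)) = {0}"

definition madic_complete :: "'a::ring_1 itself \<Rightarrow> bool" where
  "madic_complete _ \<longleftrightarrow> (\<forall>s::nat \<Rightarrow> 'a. madic_cauchy s \<longrightarrow> (\<exists>L. madic_lim s L))"

definition msum :: "(nat \<Rightarrow> 'a::ring_1) \<Rightarrow> 'a" where
  "msum t = (THE L. madic_lim (\<lambda>N. \<Sum>i<N. t i) L)"

definition ring_automorphism :: "('a::ring_1 \<Rightarrow> 'a) \<Rightarrow> bool" where
  "ring_automorphism \<sigma> \<longleftrightarrow> bij \<sigma> \<and> \<sigma> 1 = 1 \<and>
     (\<forall>x y. \<sigma> (x + y) = \<sigma> x + \<sigma> y \<and> \<sigma> (x * y) = \<sigma> x * \<sigma> y)"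

definition sigma_derivation :: "('a::ring_1 \<Rightarrow> 'a) \<Rightarrow> ('a \<Rightarrow> 'a) \<Rightarrow> bool" where
  "sigma_derivation \<sigma> \<delta> \<longleftrightarrow>
     (\<forall>x y. \<delta> (x + y) = \<delta> x + \<delta> y \<and> \<delta> (x * y) = \<delta> x * y + \<sigma> x * \<delta> y)"

text \<open>Coefficients of X^i b = \<Sum>_k xb_coeff i b k X^k, computed from X r = \<sigma>(r) X + \<delta>(r).\<close>
primrec xb_coeff :: "('a::ring_1 \<Rightarrow> 'a) \<Rightarrow> ('a \<Rightarrow> 'a) \<Rightarrow> nat \<Rightarrow> 'a \<Rightarrow> nat \<Rightarrow> 'a" where
  "xb_coeff \<sigma> \<delta> 0 b k = (if k = 0 then b else 0)"
| "xb_coeff \<sigma> \<delta> (Suc i) b k =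
     (if k = 0 then 0 else \<sigma> (xb_coeff \<sigma> \<delta> i b (k - 1))) + \<delta> (xb_coeff \<sigma> \<delta> i b k)"

text \<open>Skew power series are coefficient sequences nat \<Rightarrow> 'a. Product in R[[X;\<sigma>,\<delta>]]:
  (\<Sum> g_i X^i)(\<Sum> f_j X^j) = \<Sum>_i \<Sum>_j g_i (X^i f_j) X^j, the i-sum taken m-adically.\<close>
definition skew_mult :: "('a::ring_1 \<Rightarrow> 'a) \<Rightarrow> ('a \<Rightarrow> 'a) \<Rightarrow> (nat \<Rightarrow> 'a) \<Rightarrow> (nat \<Rightarrow> 'a) \<Rightarrow> nat \<Rightarrow> 'a" where
  "skew_mult \<sigma> \<delta> g f n = msum (\<lambda>i. \<Sum>j\<le>n. g i * xb_coeff \<sigma> \<delta> i (f j) (n - j))"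

definition ord_red :: "(nat \<Rightarrow> 'a::ring_1) \<Rightarrow> nat" where
  "ord_red f = (LEAST i. two_sided_unit (f i))"

end

theory Submission
  imports Defs
begin

text \<open>Let \<open>s = ord_red f\<close> and filter by the \<open>m\<close>-adic order of the coefficients. If all
  \<open>g\<^sub>i\<close> lie in \<open>m\<^sup>v\<close>, then modulo \<open>m\<^sup>v\<^sup>+\<^sup>1\<close> the coefficient of \<open>X\<^sup>k\<^sup>+\<^sup>s\<close> in \<open>g f\<close> is
  \<open>\<Sum>i\<le>k. g\<^sub>i \<sigma>\<^sup>i(f\<^sub>k\<^sub>+\<^sub>s\<^sub>-\<^sub>i)\<close>, because \<open>\<delta>\<close> raises the order and \<open>f\<^sub>j \<in> m\<close> for \<open>j < s\<close>.
  This is a lower triangular system in \<open>g\<^sub>0, \<dots>, g\<^sub>k\<close> whose diagonal entries \<open>\<sigma>\<^sup>k(f\<^sub>s)\<close> are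
  units, so on each graded piece \<open>g \<mapsto>\<close> (coefficients of \<open>g f\<close> in degrees \<open>\<ge> s\<close>) is
  bijective. Completeness upgrades graded surjectivity to surjectivity by successive
  approximation, separatedness upgrades graded injectivity to injectivity, and the
  coefficients of degree \<open>< s\<close> are absorbed by the summand \<open>\<Sum>i<s. R X\<^sup>i\<close>.\<close>

lemma ideal_mult_uminus:
  assumes "\<And>x. x \<in> I \<Longrightarrow> - x \<in> I" and "z \<in> ideal_mult I J"
  shows "- z \<in> ideal_mult I J"
  using assms(2)
proof (induction rule: ideal_mult.induct)
  case zero
  then show ?case by (simp add: ideal_mult.zero)
next
  case (prod x y)
  then show ?case using ideal_mult.prod[OF assms(1) prod(2)] by simp
next
  case (add a b)
  then show ?case using ideal_mult.add[of "- b" I J "- a"] by (simp add: add.commute)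
qed

lemma ideal_mult_mult_left:
  assumes "\<And>x r. x \<in> I \<Longrightarrow> r * x \<in> I" and "z \<in> ideal_mult I J"
  shows "r * z \<in> ideal_mult I J"
  using assms(2)
proof (induction rule: ideal_mult.induct)
  case zero
  then show ?case by (simp add: ideal_mult.zero)
next
  case (prod x y)
  then show ?case using ideal_mult.prod[OF assms(1) prod(2)] by (simp add: mult.assoc)
next
  case (add a b)
  then show ?case using ideal_mult.add by (simp add: distrib_left)
qed

fun tri_solve :: "(nat \<Rightarrow> 'a::ring_1) \<Rightarrow> (nat \<Rightarrow> nat \<Rightarrow> 'a) \<Rightarrow> (nat \<Rightarrow> 'a) \<Rightarrow> nat \<Rightarrow> 'a" where
  "tri_solve E C D k = (E k - (\<Sum>i<k. tri_solve E C D i * C i k)) * D k"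

declare tri_solve.simps [simp del]

lemma tri_solve_eq:
  assumes "\<And>i. D i * C i i = 1"
  shows "(\<Sum>i\<le>k. tri_solve E C D i * C i k) = E k"
proof -
  have "tri_solve E C D k * C k k = E k - (\<Sum>i<k. tri_solve E C D i * C i k)"
    by (subst tri_solve.simps) (simp add: mult.assoc assms)
  then show ?thesis by (simp add: lessThan_Suc_atMost[symmetric])
qed

declare mpow.simps(2) [simp del]

locale madic_local_ring =
  assumes local_ring: "local_ring TYPE('a::ring_1)"
begin

lemma maxideal_add: "x \<in> maxideal \<Longrightarrow> y \<in> maxideal \<Longrightarrow> x + y \<in> (maxideal :: 'a set)"
  using local_ring unfolding local_ring_def by blast

lemma maxideal_mult_left: "x \<in> maxideal \<Longrightarrow> r * x \<in> (maxideal :: 'a set)"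
  using local_ring unfolding local_ring_def by blast

lemma maxideal_mult_right: "x \<in> maxideal \<Longrightarrow> x * r \<in> (maxideal :: 'a set)"
  using local_ring unfolding local_ring_def by blast

lemma zero_in_maxideal: "(0::'a) \<in> maxideal"
  using local_ring unfolding local_ring_def maxideal_def two_sided_unit_def by auto

lemma uminus_in_maxideal: "x \<in> maxideal \<Longrightarrow> - x \<in> (maxideal :: 'a set)"
  using maxideal_mult_left[of x "- 1"] by simp

lemma mpow_zero [simp]: "(0::'a) \<in> mpow n"
  by (cases n) (simp_all add: ideal_mult.zero mpow.simps(2))

lemma mpow_add: "x \<in> mpow n \<Longrightarrow> y \<in> mpow n \<Longrightarrow> x + y \<in> (mpow n :: 'a set)"
  by (cases n) (simp_all add: ideal_mult.add mpow.simps(2))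

lemma mpow_uminus: "x \<in> mpow n \<Longrightarrow> - x \<in> (mpow n :: 'a set)"
  by (cases n) (simp_all add: ideal_mult_uminus uminus_in_maxideal mpow.simps(2))

lemma mpow_diff: "x \<in> mpow n \<Longrightarrow> y \<in> mpow n \<Longrightarrow> x - y \<in> (mpow n :: 'a set)"
  using mpow_add[of x n "- y"] mpow_uminus[of y n] by simp

lemma mpow_sum: "(\<And>i. i \<in> A \<Longrightarrow> t i \<in> mpow n) \<Longrightarrow> sum t A \<in> (mpow n :: 'a set)"
  by (induction A rule: infinite_finite_induct) (simp_all add: mpow_add)

lemma mpow_mult_left: "x \<in> mpow n \<Longrightarrow> r * x \<in> (mpow n :: 'a set)"
  by (cases n) (simp_all add: ideal_mult_mult_left maxideal_mult_left mpow.simps(2))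

lemma mpow_mult: "x \<in> mpow a \<Longrightarrow> y \<in> mpow b \<Longrightarrow> x * y \<in> (mpow (a + b) :: 'a set)"
proof (induction a arbitrary: x)
  case 0
  then show ?case by (simp add: mpow_mult_left)
next
  case (Suc a)
  from Suc.prems(1) have "x \<in> ideal_mult maxideal (mpow a)" by (simp add: mpow.simps(2))
  then show ?case
  proof (induction rule: ideal_mult.induct)
    case zero
    then show ?case by (simp add: ideal_mult.zero)
  next
    case (prod p q)
    then show ?case
      using ideal_mult.prod[OF prod(1) Suc.IH[OF prod(2) Suc.prems(2)]]
      by (simp add: mult.assoc mpow.simps(2))
  next
    case (add u w)
    then show ?case by (simp add: distrib_right ideal_mult.add mpow.simps(2))
  qed
qed

lemma mpow_mult_right: "x \<in> mpow n \<Longrightarrow> x * r \<in> (mpow n :: 'a set)"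
  using mpow_mult[of x n r 0] by simp

lemma mpow_Suc_subset: "mpow (Suc n) \<subseteq> (mpow n :: 'a set)"
proof
  fix z :: 'a
  assume "z \<in> mpow (Suc n)"
  then have "z \<in> ideal_mult maxideal (mpow n)" by (simp add: mpow.simps(2))
  then show "z \<in> mpow n"
    by (induction rule: ideal_mult.induct) (simp_all add: mpow_mult_left mpow_add)
qed

lemma mpow_antimono: "a \<le> b \<Longrightarrow> mpow b \<subseteq> (mpow a :: 'a set)"
  by (induction b rule: dec_induct) (use mpow_Suc_subset in blast)+

lemma mpow_1: "mpow 1 = (maxideal :: 'a set)"
proof
  show "mpow 1 \<subseteq> (maxideal :: 'a set)"
  proof
    fix z :: 'a
    assume "z \<in> mpow 1"
    then have "z \<in> ideal_mult maxideal UNIV" by (simp add: mpow.simps(2))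
    then show "z \<in> maxideal"
      by (induction rule: ideal_mult.induct)
        (simp_all add: zero_in_maxideal maxideal_mult_right maxideal_add)
  qed
  show "maxideal \<subseteq> (mpow 1 :: 'a set)"
    using ideal_mult.prod[of _ maxideal 1 UNIV] by (auto simp: mpow.simps(2))
qed

lemma sum_lessThan_diff_mpow:
  fixes p q :: nat
  assumes "q \<le> p" and "\<And>i. q \<le> i \<Longrightarrow> t i \<in> mpow n"
  shows "(\<Sum>i<p. t i) - (\<Sum>i<q. t i) \<in> (mpow n :: 'a set)"
proof -
  have "(\<Sum>i<p. t i) = (\<Sum>i\<in>{..<p} - {..<q}. t i) + (\<Sum>i<q. t i)"
    using assms(1) by (intro sum.subset_diff) auto
  then show ?thesis using assms(2) by (auto intro: mpow_sum)
qed

lemma tri_system_mpow: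
  fixes k :: nat
  assumes unit: "\<And>i. two_sided_unit (C i i)"
    and sums: "\<And>k. (\<Sum>i\<le>k. x i * C i k) \<in> (mpow v :: 'a set)"
  shows "x k \<in> mpow v"
proof (induction k rule: less_induct)
  case (less k)
  have "x k * C k k = (\<Sum>i\<le>k. x i * C i k) - (\<Sum>i<k. x i * C i k)"
    by (simp add: lessThan_Suc_atMost[symmetric])
  also have "\<dots> \<in> mpow v"
    using less by (intro mpow_diff sums mpow_sum mpow_mult_right) auto
  finally have "x k * C k k \<in> mpow v" .
  moreover obtain w where "C k k * w = 1"
    using unit unfolding two_sided_unit_def by blast
  ultimately show ?case using mpow_mult_right[of "x k * C k k" v w] by (simp add: mult.assoc)
qed

lemma successive_corrections:
  fixes \<Phi> :: "(nat \<Rightarrow> 'a) \<Rightarrow> nat \<Rightarrow> 'a" and h :: "nat \<Rightarrow> 'a"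
  assumes additive: "\<And>g g'. \<Phi> (\<lambda>i. g i + g' i) = (\<lambda>k. \<Phi> g k + \<Phi> g' k)"
    and approximable: "\<And>e v. (\<And>k. e k \<in> mpow v) \<Longrightarrow>
        \<exists>g. (\<forall>i. g i \<in> mpow v) \<and> (\<forall>k. e k - \<Phi> g k \<in> mpow (Suc v))"
  obtains d where "\<And>v i. d v i \<in> mpow v"
    and "\<And>V k. h k - \<Phi> (\<lambda>i. \<Sum>v<V. d v i) k \<in> mpow V"
proof -
  have "\<forall>v. \<exists>G. \<forall>e. (\<forall>k. e k \<in> mpow v) \<longrightarrow>
      (\<forall>i. G e i \<in> mpow v) \<and> (\<forall>k. e k - \<Phi> (G e) k \<in> mpow (Suc v))"
    by (intro allI choice) (use approximable in blast)
  then obtain F where F: "\<And>e v. (\<And>k. e k \<in> mpow v) \<Longrightarrow>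
      (\<forall>i. F v e i \<in> mpow v) \<and> (\<forall>k. e k - \<Phi> (F v e) k \<in> mpow (Suc v))"
    by metis
  define approx where "approx = rec_nat (\<lambda>_. 0) (\<lambda>v a i. a i + F v (\<lambda>k. h k - \<Phi> a k) i)"
  define d where "d v = F v (\<lambda>k. h k - \<Phi> (approx v) k)" for v
  have approx_sum: "approx V = (\<lambda>i. \<Sum>v<V. d v i)" for V
    by (induction V) (simp_all add: approx_def d_def)
  have residual: "h k - \<Phi> (approx v) k \<in> mpow v" for v k
  proof (induction v arbitrary: k)
    case 0
    then show ?case by simp
  next
    case (Suc v)
    have "h k - \<Phi> (approx v) k - \<Phi> (d v) k \<in> mpow (Suc v)"
      using F[of "\<lambda>k. h k - \<Phi> (approx v) k" v] Suc.IH unfolding d_def by blast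
    then show ?case by (simp add: approx_sum additive diff_diff_eq)
  qed
  have "d v i \<in> mpow v" for v i
    using F[of "\<lambda>k. h k - \<Phi> (approx v) k" v] residual unfolding d_def by blast
  then show thesis using residual unfolding approx_sum by (rule that)
qed

end

definition madic_null :: "(nat \<Rightarrow> 'a::ring_1) \<Rightarrow> bool" where
  "madic_null t \<longleftrightarrow> (\<forall>n. \<exists>N. \<forall>i\<ge>N. t i \<in> mpow n)"

locale complete_madic_ring = madic_local_ring +
  assumes separated: "madic_separated TYPE('a::ring_1)"
    and complete: "madic_complete TYPE('a::ring_1)"
begin

lemma mem_all_mpow_imp_zero: "(\<And>n. x \<in> mpow n) \<Longrightarrow> x = (0::'a)"
  using separated unfolding madic_separated_def by blast

lemma madic_lim_unique:
  assumes "madic_lim s L" and "madic_lim s L'"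
  shows "L = (L' :: 'a)"
proof -
  have "L' - L \<in> mpow n" for n
  proof -
    obtain N N' where "\<forall>p\<ge>N. s p - L \<in> mpow n" and "\<forall>p\<ge>N'. s p - L' \<in> mpow n"
      using assms unfolding madic_lim_def by meson
    then have "s (max N N') - L \<in> mpow n" and "s (max N N') - L' \<in> mpow n" by simp_all
    from mpow_diff[OF this] show ?thesis by simp
  qed
  then show ?thesis using mem_all_mpow_imp_zero[of "L' - L"] by simp
qed

lemma madic_null_add: "madic_null t \<Longrightarrow> madic_null u \<Longrightarrow> madic_null (\<lambda>i. t i + u i :: 'a)"
  unfolding madic_null_def by (metis mpow_add max.bounded_iff)

lemma madic_lim_msum:
  assumes "madic_null t"
  shows "madic_lim (\<lambda>N. \<Sum>i<N. t i) (msum t :: 'a)"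
proof -
  have "madic_cauchy (\<lambda>N. \<Sum>i<N. t i)"
    unfolding madic_cauchy_def
  proof
    fix n
    obtain N where N: "\<And>i. N \<le> i \<Longrightarrow> t i \<in> mpow n"
      using assms unfolding madic_null_def by blast
    have tail: "(\<Sum>i<p. t i) - (\<Sum>i<N. t i) \<in> mpow n" if "N \<le> p" for p
      using that N by (rule sum_lessThan_diff_mpow)
    have "(\<Sum>i<p. t i) - (\<Sum>i<q. t i) \<in> mpow n" if "N \<le> p" "N \<le> q" for p q
      using mpow_diff[OF tail[OF that(1)] tail[OF that(2)]] by simp
    then show "\<exists>N. \<forall>p\<ge>N. \<forall>q\<ge>N. (\<Sum>i<p. t i) - (\<Sum>i<q. t i) \<in> mpow n" by blast
  qed
  then obtain L where L: "madic_lim (\<lambda>N. \<Sum>i<N. t i) L"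
    using complete unfolding madic_complete_def by blast
  have "msum t = L"
    unfolding msum_def using L by (rule the_equality) (rule madic_lim_unique[OF _ L])
  then show ?thesis using L by simp
qed

lemma msum_tail:
  assumes "madic_null t" and "\<And>i. N \<le> i \<Longrightarrow> t i \<in> mpow V"
  shows "msum t - (\<Sum>i<N. t i) \<in> (mpow V :: 'a set)"
proof -
  obtain M where "\<forall>p\<ge>M. (\<Sum>i<p. t i) - msum t \<in> mpow V"
    using madic_lim_msum[OF assms(1)] unfolding madic_lim_def by blast
  then have lim: "(\<Sum>i<max M N. t i) - msum t \<in> mpow V" by simp
  have "(\<Sum>i<max M N. t i) - (\<Sum>i<N. t i) \<in> mpow V"
    using assms(2) by (intro sum_lessThan_diff_mpow) auto
  from mpow_diff[OF this lim] show ?thesis by simp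
qed

lemma msum_add:
  assumes "madic_null t" and "madic_null u"
  shows "msum (\<lambda>i. t i + u i) = msum t + (msum u :: 'a)"
proof -
  have "msum (\<lambda>i. t i + u i) - msum t - msum u \<in> mpow V" for V
  proof -
    obtain N where N: "\<And>i. N \<le> i \<Longrightarrow> t i \<in> mpow V \<and> u i \<in> mpow V"
      using assms unfolding madic_null_def by (metis max.bounded_iff)
    have "(msum (\<lambda>i. t i + u i) - (\<Sum>i<N. t i + u i)) - (msum t - (\<Sum>i<N. t i))
        - (msum u - (\<Sum>i<N. u i)) \<in> mpow V"
      using N by (intro mpow_diff msum_tail madic_null_add assms mpow_add) auto
    then show ?thesis by (simp add: sum.distrib algebra_simps)
  qed
  then show ?thesis using mem_all_mpow_imp_zero by (metis diff_diff_eq eq_iff_diff_eq_0)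
qed

lemma madic_null_if_mpow: "(\<And>v. t v \<in> mpow v) \<Longrightarrow> madic_null (t :: nat \<Rightarrow> 'a)"
  unfolding madic_null_def using mpow_antimono by blast

lemma solve_by_successive_approximation:
  fixes \<Phi> :: "(nat \<Rightarrow> 'a) \<Rightarrow> nat \<Rightarrow> 'a" and h :: "nat \<Rightarrow> 'a"
  assumes additive: "\<And>g g'. \<Phi> (\<lambda>i. g i + g' i) = (\<lambda>k. \<Phi> g k + \<Phi> g' k)"
    and continuous: "\<And>g V k. (\<And>i. g i \<in> mpow V) \<Longrightarrow> \<Phi> g k \<in> mpow V"
    and approximable: "\<And>e v. (\<And>k. e k \<in> mpow v) \<Longrightarrow>
        \<exists>g. (\<forall>i. g i \<in> mpow v) \<and> (\<forall>k. e k - \<Phi> g k \<in> mpow (Suc v))"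
  shows "\<exists>g. \<Phi> g = h"
proof -
  obtain d where d_mpow: "\<And>v i. d v i \<in> mpow v"
    and residual: "\<And>V k. h k - \<Phi> (\<lambda>i. \<Sum>v<V. d v i) k \<in> mpow V"
    using successive_corrections[where h = h, OF additive approximable] by blast
  define g where "g i = msum (\<lambda>v. d v i)" for i
  have "h k - \<Phi> g k \<in> mpow V" for k V
  proof -
    let ?a = "\<lambda>i. \<Sum>v<V. d v i"
    have "g i - ?a i \<in> mpow V" for i
      unfolding g_def using d_mpow mpow_antimono by (intro msum_tail madic_null_if_mpow) blast+
    then have "\<Phi> (\<lambda>i. g i - ?a i) k \<in> mpow V"
      by (rule continuous)
    then have "(h k - \<Phi> ?a k) - \<Phi> (\<lambda>i. g i - ?a i) k \<in> mpow V"
      by (rule mpow_diff[OF residual])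
    moreover have "\<Phi> g k = \<Phi> ?a k + \<Phi> (\<lambda>i. g i - ?a i) k"
      using additive[of ?a "\<lambda>i. g i - ?a i"] by simp
    ultimately show ?thesis by (simp add: algebra_simps)
  qed
  then have "\<Phi> g = h"
    using mem_all_mpow_imp_zero by (metis eq_iff_diff_eq_0 ext)
  then show ?thesis by blast
qed

end

locale sigma_derivation_ring = madic_local_ring +
  fixes \<sigma> \<delta> :: "'a::ring_1 \<Rightarrow> 'a"
  assumes automorphism: "ring_automorphism \<sigma>"
    and sigma_maxideal: "\<sigma> ` maxideal \<subseteq> maxideal"
    and derivation: "sigma_derivation \<sigma> \<delta>"
    and delta_range: "range \<delta> \<subseteq> maxideal"
    and delta_maxideal: "\<delta> ` maxideal \<subseteq> mpow 2"
begin

lemma sigma_add: "\<sigma> (x + y) = \<sigma> x + \<sigma> y"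
  using automorphism unfolding ring_automorphism_def by blast

lemma sigma_mult: "\<sigma> (x * y) = \<sigma> x * \<sigma> y"
  using automorphism unfolding ring_automorphism_def by blast

lemma sigma_one: "\<sigma> 1 = 1"
  using automorphism unfolding ring_automorphism_def by blast

lemma sigma_zero: "\<sigma> 0 = 0"
  using sigma_add[of 0 0] by simp

lemma delta_add: "\<delta> (x + y) = \<delta> x + \<delta> y"
  using derivation unfolding sigma_derivation_def by blast

lemma delta_mult: "\<delta> (x * y) = \<delta> x * y + \<sigma> x * \<delta> y"
  using derivation unfolding sigma_derivation_def by blast

lemma delta_zero: "\<delta> 0 = 0"
  using delta_add[of 0 0] by simp

lemma funpow_sigma_mult: "(\<sigma> ^^ i) (x * y) = (\<sigma> ^^ i) x * (\<sigma> ^^ i) y"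
  by (induction i) (simp_all add: sigma_mult)

lemma funpow_sigma_one: "(\<sigma> ^^ i) 1 = 1"
  by (induction i) (simp_all add: sigma_one)

lemma funpow_sigma_unit: "two_sided_unit x \<Longrightarrow> two_sided_unit ((\<sigma> ^^ i) x)"
  unfolding two_sided_unit_def by (metis funpow_sigma_mult funpow_sigma_one)

lemma funpow_sigma_maxideal: "x \<in> maxideal \<Longrightarrow> (\<sigma> ^^ i) x \<in> maxideal"
  by (induction i) (use sigma_maxideal in auto)

lemma sigma_mpow: "x \<in> mpow n \<Longrightarrow> \<sigma> x \<in> mpow n"
proof (induction n arbitrary: x)
  case 0
  then show ?case by simp
next
  case (Suc n)
  from Suc.prems have "x \<in> ideal_mult maxideal (mpow n)" by (simp add: mpow.simps(2))
  then show ?case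
  proof (induction rule: ideal_mult.induct)
    case zero
    then show ?case by (simp add: sigma_zero)
  next
    case (prod p q)
    then show ?case
      using ideal_mult.prod[of "\<sigma> p" maxideal "\<sigma> q" "mpow n"] sigma_maxideal Suc.IH
      by (auto simp: sigma_mult mpow.simps(2))
  next
    case (add p q)
    then show ?case by (simp add: sigma_add ideal_mult.add mpow.simps(2))
  qed
qed

lemma delta_mpow: "x \<in> mpow k \<Longrightarrow> \<delta> x \<in> mpow (Suc k)"
proof (induction k arbitrary: x)
  case 0
  then show ?case using delta_range mpow_1 by auto
next
  case (Suc k)
  from Suc.prems have "x \<in> ideal_mult maxideal (mpow k)" by (simp add: mpow.simps(2))
  then show ?case
  proof (induction rule: ideal_mult.induct)
    case zero
    then show ?case by (simp add: delta_zero)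
  next
    case (prod p q)
    have "\<delta> p * q \<in> mpow (2 + k)"
      using delta_maxideal prod(1) by (intro mpow_mult prod(2)) blast
    moreover have "\<sigma> p * \<delta> q \<in> mpow (1 + Suc k)"
      using sigma_maxideal prod(1) mpow_1 by (intro mpow_mult Suc.IH prod(2)) blast
    ultimately show ?case using mpow_add by (simp add: delta_mult)
  next
    case (add p q)
    then show ?case by (simp add: delta_add mpow_add)
  qed
qed

lemma xb_coeff_above_diag: "i < k \<Longrightarrow> xb_coeff \<sigma> \<delta> i b k = 0"
  by (induction i arbitrary: k) (simp_all add: sigma_zero delta_zero)

lemma xb_coeff_diag: "xb_coeff \<sigma> \<delta> i b i = (\<sigma> ^^ i) b"
  by (induction i) (simp_all add: xb_coeff_above_diag delta_zero)

text \<open>Reaching degree \<open>k\<close> in \<open>X\<^sup>i b\<close> takes \<open>i - k\<close> applications of \<open>\<delta>\<close>, each of which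
  raises the \<open>m\<close>-adic order.\<close>

lemma xb_coeff_mpow: "xb_coeff \<sigma> \<delta> i b k \<in> mpow (i - k)"
proof (induction i arbitrary: k)
  case 0
  then show ?case by simp
next
  case (Suc i)
  have "(if k = 0 then 0 else \<sigma> (xb_coeff \<sigma> \<delta> i b (k - 1))) \<in> mpow (Suc i - k)"
    using Suc.IH[of "k - 1"] by (auto intro: sigma_mpow)
  moreover have "\<delta> (xb_coeff \<sigma> \<delta> i b k) \<in> mpow (Suc i - k)"
    using delta_mpow[OF Suc.IH[of k]] mpow_antimono[of "Suc i - k" "Suc (i - k)"] by force
  ultimately show ?case by (simp add: mpow_add)
qed

lemma xb_coeff_off_diag: "i \<noteq> k \<Longrightarrow> xb_coeff \<sigma> \<delta> i b k \<in> mpow 1"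
proof (cases "i < k")
  case False
  assume "i \<noteq> k"
  with False have "1 \<le> i - k" by simp
  then show ?thesis using xb_coeff_mpow[of i b k] mpow_antimono by blast
qed (simp add: xb_coeff_above_diag)

end

locale skew_power_series_ring = complete_madic_ring + sigma_derivation_ring
begin

lemma skew_mult_terms_null:
  "madic_null (\<lambda>i. \<Sum>j\<le>n. g i * xb_coeff \<sigma> \<delta> i (f j) (n - j))"
  unfolding madic_null_def
proof
  fix V
  have "(\<Sum>j\<le>n. g i * xb_coeff \<sigma> \<delta> i (f j) (n - j)) \<in> mpow V" if "V + n \<le> i" for i
  proof (intro mpow_sum mpow_mult_left)
    fix j
    have "V \<le> i - (n - j)" using that by simp
    then show "xb_coeff \<sigma> \<delta> i (f j) (n - j) \<in> mpow V"
      using xb_coeff_mpow mpow_antimono by blast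
  qed
  then show "\<exists>N. \<forall>i\<ge>N. (\<Sum>j\<le>n. g i * xb_coeff \<sigma> \<delta> i (f j) (n - j)) \<in> mpow V" by blast
qed

lemma skew_mult_add_left:
  "skew_mult \<sigma> \<delta> (\<lambda>i. g i + g' i) f n = skew_mult \<sigma> \<delta> g f n + skew_mult \<sigma> \<delta> g' f n"
  unfolding skew_mult_def distrib_right sum.distrib
  by (rule msum_add) (rule skew_mult_terms_null)+

lemma skew_mult_mpow:
  assumes "\<And>i. g i \<in> mpow V"
  shows "skew_mult \<sigma> \<delta> g f n \<in> mpow V"
proof -
  have "skew_mult \<sigma> \<delta> g f n - (\<Sum>i<0. \<Sum>j\<le>n. g i * xb_coeff \<sigma> \<delta> i (f j) (n - j)) \<in> mpow V"
    unfolding skew_mult_def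
    by (rule msum_tail[OF skew_mult_terms_null]) (simp add: assms mpow_sum mpow_mult_right)
  then show ?thesis by simp
qed

lemma skew_mult_leading_terms:
  assumes g: "\<And>i. g i \<in> mpow v"
  shows "skew_mult \<sigma> \<delta> g f n - (\<Sum>i\<le>n. g i * (\<sigma> ^^ i) (f (n - i))) \<in> mpow (Suc v)"
proof -
  let ?t = "\<lambda>i. \<Sum>j\<le>n. g i * xb_coeff \<sigma> \<delta> i (f j) (n - j)"
  have off_diag: "g i * xb_coeff \<sigma> \<delta> i (f j) (n - j) \<in> mpow (Suc v)" if "i \<noteq> n - j" for i j
    using mpow_mult[OF g xb_coeff_off_diag[OF that]] by simp
  have tail: "msum ?t - (\<Sum>i<Suc n. ?t i) \<in> mpow (Suc v)"
    by (rule msum_tail[OF skew_mult_terms_null]) (auto intro!: mpow_sum off_diag)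
  have diag: "?t i - g i * (\<sigma> ^^ i) (f (n - i)) \<in> mpow (Suc v)" if "i \<le> n" for i
  proof -
    have "?t i = g i * xb_coeff \<sigma> \<delta> i (f (n - i)) (n - (n - i))
        + (\<Sum>j\<in>{..n} - {n - i}. g i * xb_coeff \<sigma> \<delta> i (f j) (n - j))"
      by (rule sum.remove) auto
    then show ?thesis
      using that by (auto simp: xb_coeff_diag intro!: mpow_sum off_diag)
  qed
  have "(\<Sum>i\<le>n. ?t i) - (\<Sum>i\<le>n. g i * (\<sigma> ^^ i) (f (n - i))) \<in> mpow (Suc v)"
    unfolding sum_subtractf[symmetric] using diag by (auto intro: mpow_sum)
  from mpow_add[OF tail this] show ?thesis
    unfolding skew_mult_def lessThan_Suc_atMost by simp
qed

end

locale finite_reduced_order = skew_power_series_ring \<sigma> \<delta>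
  for \<sigma> \<delta> :: "'a::ring_1 \<Rightarrow> 'a" +
  fixes f :: "nat \<Rightarrow> 'a"
  assumes has_unit_coeff: "\<exists>i. two_sided_unit (f i)"
begin

lemma unit_coeff_ord_red: "two_sided_unit (f (ord_red f))"
  unfolding ord_red_def using has_unit_coeff by (rule LeastI_ex)

lemma coeff_below_ord_red: "j < ord_red f \<Longrightarrow> f j \<in> maxideal"
  unfolding ord_red_def maxideal_def using not_less_Least by blast

lemma skew_mult_high_coeff_congruence:
  assumes g: "\<And>i. g i \<in> mpow v"
  shows "skew_mult \<sigma> \<delta> g f (k + ord_red f)
           - (\<Sum>i\<le>k. g i * (\<sigma> ^^ i) (f (k + ord_red f - i))) \<in> mpow (Suc v)"
proof -
  let ?n = "k + ord_red f"
  let ?u = "\<lambda>i. g i * (\<sigma> ^^ i) (f (?n - i))"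
  have "?u i \<in> mpow (Suc v)" if "i \<in> {Suc k..?n}" for i
  proof -
    have "(\<sigma> ^^ i) (f (?n - i)) \<in> mpow 1"
      unfolding mpow_1 using that by (auto intro!: funpow_sigma_maxideal coeff_below_ord_red)
    from mpow_mult[OF g this] show ?thesis by simp
  qed
  then have "(\<Sum>i\<in>{Suc k..?n}. ?u i) \<in> mpow (Suc v)"
    by (rule mpow_sum)
  then have "(\<Sum>i\<le>?n. ?u i) - (\<Sum>i\<le>k. ?u i) \<in> mpow (Suc v)"
    by (simp add: sum_up_index_split)
  moreover have "skew_mult \<sigma> \<delta> g f ?n - (\<Sum>i\<le>?n. ?u i) \<in> mpow (Suc v)"
    using g by (rule skew_mult_leading_terms)
  ultimately show ?thesis using mpow_add by fastforce
qed

lemma tri_system_diag_unit: "two_sided_unit ((\<sigma> ^^ i) (f (i + ord_red f - i)))"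
  by (simp add: funpow_sigma_unit unit_coeff_ord_red)

lemma high_coeffs_surj: "\<exists>g. \<forall>k. skew_mult \<sigma> \<delta> g f (k + ord_red f) = h k"
proof -
  let ?C = "\<lambda>i k. (\<sigma> ^^ i) (f (k + ord_red f - i))"
  obtain w where w: "w * f (ord_red f) = 1"
    using unit_coeff_ord_red unfolding two_sided_unit_def by blast
  have diag_inv: "(\<sigma> ^^ i) w * ?C i i = 1" for i
    using w by (simp add: funpow_sigma_mult[symmetric] funpow_sigma_one)
  have "\<exists>g. (\<lambda>k. skew_mult \<sigma> \<delta> g f (k + ord_red f)) = h"
  proof (rule solve_by_successive_approximation)
    fix e :: "nat \<Rightarrow> 'a" and v
    assume e: "\<And>k. e k \<in> mpow v"
    let ?g = "tri_solve e ?C (\<lambda>i. (\<sigma> ^^ i) w)"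
    have sol: "(\<Sum>i\<le>k. ?g i * ?C i k) = e k" for k
      using diag_inv by (rule tri_solve_eq)
    have g_mpow: "?g i \<in> mpow v" for i
      using tri_system_diag_unit by (rule tri_system_mpow[where C = ?C]) (simp add: sol e)
    have "e k - skew_mult \<sigma> \<delta> ?g f (k + ord_red f) \<in> mpow (Suc v)" for k
      using mpow_uminus[OF skew_mult_high_coeff_congruence[where g = ?g and k = k, OF g_mpow]]
      by (simp add: sol)
    with g_mpow show "\<exists>g. (\<forall>i. g i \<in> mpow v) \<and>
        (\<forall>k. e k - skew_mult \<sigma> \<delta> g f (k + ord_red f) \<in> mpow (Suc v))" by blast
  qed (simp_all add: skew_mult_add_left skew_mult_mpow)
  then show ?thesis by metis
qed

lemma high_coeffs_zero_imp_zero: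
  assumes "\<And>k. skew_mult \<sigma> \<delta> g f (k + ord_red f) = 0"
  shows "skew_mult \<sigma> \<delta> g f n = 0"
proof -
  have "g i \<in> mpow v" for v i
  proof (induction v arbitrary: i)
    case (Suc v)
    have "(\<Sum>i\<le>k. g i * (\<sigma> ^^ i) (f (k + ord_red f - i))) \<in> mpow (Suc v)" for k
      using mpow_uminus[OF skew_mult_high_coeff_congruence[where g = g and k = k, OF Suc.IH]] assms
      by simp
    with tri_system_diag_unit show ?case by (rule tri_system_mpow)
  qed simp
  then show ?thesis by (intro mem_all_mpow_imp_zero skew_mult_mpow)
qed

lemma Af_plus_low_degree_eq_A:
  "\<exists>g r. h = (\<lambda>n. skew_mult \<sigma> \<delta> g f n + (if n < ord_red f then r n else 0))"
proof -
  obtain g where g: "\<And>k. skew_mult \<sigma> \<delta> g f (k + ord_red f) = h (k + ord_red f)"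
    using high_coeffs_surj[of "\<lambda>k. h (k + ord_red f)"] by blast
  have "h = (\<lambda>n. skew_mult \<sigma> \<delta> g f n
                + (if n < ord_red f then h n - skew_mult \<sigma> \<delta> g f n else 0))"
  proof
    fix n
    show "h n = skew_mult \<sigma> \<delta> g f n
                + (if n < ord_red f then h n - skew_mult \<sigma> \<delta> g f n else 0)"
      using g[of "n - ord_red f"] by (cases "n < ord_red f") simp_all
  qed
  then show ?thesis by (intro exI)
qed

lemma Af_low_degree_direct:
  assumes "(\<lambda>n. skew_mult \<sigma> \<delta> g f n + (if n < ord_red f then r n else 0)) = (\<lambda>n. 0)"
  shows "skew_mult \<sigma> \<delta> g f = (\<lambda>n. 0) \<and> (\<forall>i < ord_red f. r i = 0)"
proof -
  have sum_zero: "skew_mult \<sigma> \<delta> g f n + (if n < ord_red f then r n else 0) = 0" for n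
    using fun_cong[OF assms] by simp
  have "skew_mult \<sigma> \<delta> g f (k + ord_red f) = 0" for k
    using sum_zero[of "k + ord_red f"] by simp
  then have mult_zero: "skew_mult \<sigma> \<delta> g f n = 0" for n
    by (rule high_coeffs_zero_imp_zero)
  moreover have "r i = 0" if "i < ord_red f" for i
    using sum_zero[of i] mult_zero[of i] that by simp
  ultimately show ?thesis by auto
qed

end

theorem mainTheorem5:
  fixes \<sigma> \<delta> :: "'a::ring_1 \<Rightarrow> 'a" and f :: "nat \<Rightarrow> 'a"
  assumes "local_ring TYPE('a)"
    and "madic_separated TYPE('a)"
    and "madic_complete TYPE('a)"
    and "ring_automorphism \<sigma>"
    and "\<sigma> ` maxideal = maxideal"
    and "sigma_derivation \<sigma> \<delta>"
    and "range \<delta> \<subseteq> maxideal"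
    and "\<delta> ` maxideal \<subseteq> mpow 2"
    and "\<exists>i. two_sided_unit (f i)"
  shows "(\<forall>h :: nat \<Rightarrow> 'a. \<exists>g r. h = (\<lambda>n. skew_mult \<sigma> \<delta> g f n + (if n < ord_red f then r n else 0)))
       \<and> (\<forall>g r. (\<lambda>n. skew_mult \<sigma> \<delta> g f n + (if n < ord_red f then r n else 0)) = (\<lambda>n. 0)
              \<longrightarrow> skew_mult \<sigma> \<delta> g f = (\<lambda>n. 0) \<and> (\<forall>i < ord_red f. r i = 0))"
proof -
  interpret finite_reduced_order \<sigma> \<delta> f
    using assms by unfold_locales simp_all
  show ?thesis using Af_plus_low_degree_eq_A Af_low_degree_direct by blast
qed

end
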